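(* Let $d_1\ge1$, $d_2\ge2$, and for $y_1\in\mathbb{R}$ let $\Phi_{y_1}$ denote the solution map $(u_0,u_1)\mapsto(u(\cdot,y_1,\cdot),\partial_{y_1}u(\cdot,y_1,\cdot))$ of the Cauchy problem $\partial_{y_1}^2u=\Delta_xu-\Delta_{y'}u$, $u|_{y_1=0}=u_0$, $\partial_{y_1}u|_{y_1=0}=u_1$, given on the Fourier side (see context). Let $\Phi^S_{y_1}$ be its restriction to $X^S$ for $y_1\ge0$, $\Phi^U_{y_1}$ its restriction to $X^U$ for $y_1\le0$, and $\Phi^C_{y_1}$ its restriction to $X^C$. Then for all $u,v\in X^S$ and $y_1\ge0$, $$\|\Phi^S_{y_1}(u)-\Phi^S_{y_1}(v)\|_X^2\le\|u-v\|_X^2,$$ and for all $u,v\in X^U$ and $y_1\le0$, $$\|\Phi^U_{y_1}(u)-\Phi^U_{y_1}(v)\|_X^2\le\|u-v\|_X^2.$$ For $u\in X^C$, $\Phi^C_{y_1}=\Phi^S_{y_1}$ for $y_1\ge0$ and $\Phi^C_{y_1}=\Phi^U_{y_1}$ for $y_1\le0$, and equality holds in both estimates.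
   Context: Coordinates $(x,y_1,y')\in\mathbb{R}^{d_1}\times\mathbb{R}\times\mathbb{R}^{d_2-1}$; Fourier transform in $(x,y')$ with dual variables $(\xi,\eta')$. $\omega=\sqrt{|\xi|^2-|\eta'|^2}$ on $\{|\eta'|\le|\xi|\}$, $\lambda=\sqrt{|\eta'|^2-|\xi|^2}$ on $\{|\xi|\le|\eta'|\}$. The solution map acts on the Fourier side by the matrix $\begin{pmatrix}\cos(\omega y_1)&\sin(\omega y_1)/\omega\\-\omega\sin(\omega y_1)&\cos(\omega y_1)\end{pmatrix}$ on $\{|\eta'|\le|\xi|\}$ and $\begin{pmatrix}\cosh(\lambda y_1)&\sinh(\lambda y_1)/\lambda\\ \lambda\sinh(\lambda y_1)&\cosh(\lambda y_1)\end{pmatrix}$ on $\{|\xi|<|\eta'|\}$. The space $X$ consists of pairs $v=(v_0,v_1)$ with $\|v\|_X^2=\iint_{\{|\eta'|<|\xi|\}}\omega^2|\hat v_0|^2+\iint_{\{|\xi|\le|\eta'|\}}\lambda^2|\hat v_0|^2+\iint|\hat v_1|^2<\infty$. $X^S=\{v\in X:\hat v_0+\hat v_1/\lambda=0\text{ for }|\xi|<|\eta'|\}$, $X^U=\{v\in X:\hat v_0-\hat v_1/\lambda=0\text{ for }|\xi|<|\eta'|\}$, $X^C=\{v\in X:\mathrm{supp}(\hat v_0,\hat v_1)\subseteq\{|\xi|\ge|\eta'|\}\}=X^S\cap X^U$. *)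

theory Defs
  imports "HOL-Analysis.Analysis"
begin

text \<open>Everything is expressed on the Fourier side. The frequency variable is
  z = (xi, eta') with xi in 'a (dimension d1) and eta' in 'b (dimension d2 - 1).
  A pair v = (v0, v1) stands for the pair of Fourier transforms (hat v0, hat v1).\<close>

type_synonym ('a, 'b) fpair = "('a \<times> 'b \<Rightarrow> complex) \<times> ('a \<times> 'b \<Rightarrow> complex)"

definition omega :: "'a::euclidean_space \<times> 'b::euclidean_space \<Rightarrow> real" where
  "omega z = sqrt ((norm (fst z))\<^sup>2 - (norm (snd z))\<^sup>2)"

definition lam :: "'a::euclidean_space \<times> 'b::euclidean_space \<Rightarrow> real" where
  "lam z = sqrt ((norm (snd z))\<^sup>2 - (norm (fst z))\<^sup>2)"

definition sin_over :: "real \<Rightarrow> real \<Rightarrow> real" where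
  "sin_over w t = (if w = 0 then t else sin (w * t) / w)"

definition sinh_over :: "real \<Rightarrow> real \<Rightarrow> real" where
  "sinh_over l t = (if l = 0 then t else sinh (l * t) / l)"

definition Phi :: "real \<Rightarrow> ('a::euclidean_space, 'b::euclidean_space) fpair \<Rightarrow> ('a, 'b) fpair" where
  "Phi y1 v =
     ((\<lambda>z. if norm (snd z) \<le> norm (fst z)
           then complex_of_real (cos (omega z * y1)) * fst v z
                + complex_of_real (sin_over (omega z) y1) * snd v z
           else complex_of_real (cosh (lam z * y1)) * fst v z
                + complex_of_real (sinh_over (lam z) y1) * snd v z),
      (\<lambda>z. if norm (snd z) \<le> norm (fst z)
           then complex_of_real (- omega z * sin (omega z * y1)) * fst v z
                + complex_of_real (cos (omega z * y1)) * snd v z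
           else complex_of_real (lam z * sinh (lam z * y1)) * fst v z
                + complex_of_real (cosh (lam z * y1)) * snd v z))"

definition normX_sq :: "('a::euclidean_space, 'b::euclidean_space) fpair \<Rightarrow> ennreal" where
  "normX_sq v =
     (\<integral>\<^sup>+ z. ennreal (indicator {z. norm (snd z) < norm (fst z)} z * (omega z)\<^sup>2 * (cmod (fst v z))\<^sup>2) \<partial>lborel)
   + (\<integral>\<^sup>+ z. ennreal (indicator {z. norm (fst z) \<le> norm (snd z)} z * (lam z)\<^sup>2 * (cmod (fst v z))\<^sup>2) \<partial>lborel)
   + (\<integral>\<^sup>+ z. ennreal ((cmod (snd v z))\<^sup>2) \<partial>lborel)"

definition spaceX :: "('a::euclidean_space, 'b::euclidean_space) fpair set" where
  "spaceX = {v. fst v \<in> borel_measurable lborel \<and> snd v \<in> borel_measurable lborel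
                \<and> normX_sq v < \<infinity>}"

definition spaceXS :: "('a::euclidean_space, 'b::euclidean_space) fpair set" where
  "spaceXS = {v \<in> spaceX. AE z in lborel. norm (fst z) < norm (snd z) \<longrightarrow>
                 fst v z + snd v z / complex_of_real (lam z) = 0}"

definition spaceXU :: "('a::euclidean_space, 'b::euclidean_space) fpair set" where
  "spaceXU = {v \<in> spaceX. AE z in lborel. norm (fst z) < norm (snd z) \<longrightarrow>
                 fst v z - snd v z / complex_of_real (lam z) = 0}"

definition spaceXC :: "('a::euclidean_space, 'b::euclidean_space) fpair set" where
  "spaceXC = {v \<in> spaceX. AE z in lborel. norm (fst z) < norm (snd z) \<longrightarrow>
                 fst v z = 0 \<and> snd v z = 0}"

definition pdiff :: "('a, 'b) fpair \<Rightarrow> ('a, 'b) fpair \<Rightarrow> ('a, 'b) fpair" where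
  "pdiff u v = ((\<lambda>z. fst u z - fst v z), (\<lambda>z. snd u z - snd v z))"

end

theory Submission
  imports Defs
begin

text \<open>
  The solution map acts pointwise in the frequency z, so it suffices to compare the integrands
  of the X-norm. Where |eta'| < |xi| it is a rotation in the coordinates (omega v0, v1), so the
  density omega^2 |v0|^2 + |v1|^2 is conserved; on the cone |eta'| = |xi| it is the shear
  (v0, v1) \<mapsto> (v0 + y1 v1, v1), which conserves |v1|^2. Where |xi| < |eta'| the constraint
  defining X^S (resp. X^U) says v1 = -lam v0 (resp. v1 = lam v0), an eigenvector of the
  hyperbolic matrix for the eigenvalue exp(-lam y1) (resp. exp(lam y1)); the density is therefore
  multiplied by a factor at most 1 when y1 \<ge> 0 (resp. y1 \<le> 0). Elements of X^C vanish there.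
  Since the solution map is linear, the estimates for differences reduce to single elements.
\<close>

lemma borel_measurable_cosh [measurable]: "(cosh :: real \<Rightarrow> real) \<in> borel_measurable borel"
  by (intro borel_measurable_continuous_onI continuous_intros)

lemma borel_measurable_sinh [measurable]: "(sinh :: real \<Rightarrow> real) \<in> borel_measurable borel"
  by (intro borel_measurable_continuous_onI continuous_intros)

lemma borel_measurable_norm_fst [measurable]:
  "(\<lambda>z::'a::real_normed_vector \<times> 'b::real_normed_vector. norm (fst z)) \<in> borel_measurable borel"
  by (intro borel_measurable_continuous_onI continuous_intros)

lemma borel_measurable_norm_snd [measurable]:
  "(\<lambda>z::'a::real_normed_vector \<times> 'b::real_normed_vector. norm (snd z)) \<in> borel_measurable borel"
  by (intro borel_measurable_continuous_onI continuous_intros)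

lemma borel_measurable_omega [measurable]: "omega \<in> borel_measurable borel"
  unfolding omega_def by measurable

lemma borel_measurable_lam [measurable]: "lam \<in> borel_measurable borel"
  unfolding lam_def by measurable

lemma borel_measurable_sin_over [measurable]: "(\<lambda>w. sin_over w t) \<in> borel_measurable borel"
  unfolding sin_over_def by measurable

lemma borel_measurable_sinh_over [measurable]: "(\<lambda>l. sinh_over l t) \<in> borel_measurable borel"
  unfolding sinh_over_def by measurable

lemma borel_measurable_Phi:
  fixes w :: "('a::euclidean_space, 'b::euclidean_space) fpair"
  assumes [measurable]: "fst w \<in> borel_measurable lborel" "snd w \<in> borel_measurable lborel"
  shows "fst (Phi y w) \<in> borel_measurable lborel" "snd (Phi y w) \<in> borel_measurable lborel"
  unfolding Phi_def fst_conv snd_conv by measurable measurable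

lemma borel_measurable_pdiff:
  assumes "u \<in> spaceX" "v \<in> spaceX"
  shows "fst (pdiff u v) \<in> borel_measurable lborel" "snd (pdiff u v) \<in> borel_measurable lborel"
  using assms unfolding spaceX_def pdiff_def by auto

lemma Phi_pdiff: "Phi y (pdiff u v) = pdiff (Phi y u) (Phi y v)"
  unfolding Phi_def pdiff_def by (simp add: algebra_simps fun_eq_iff)

definition normX_density :: "('a::euclidean_space, 'b::euclidean_space) fpair \<Rightarrow> 'a \<times> 'b \<Rightarrow> real" where
  "normX_density v z =
     (if norm (snd z) < norm (fst z) then (omega z)\<^sup>2 else (lam z)\<^sup>2) * (cmod (fst v z))\<^sup>2
     + (cmod (snd v z))\<^sup>2"

lemma normX_density_nonneg: "0 \<le> normX_density v z"
  unfolding normX_density_def by simp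

lemma normX_sq_eq_nn_integral_density:
  fixes v :: "('a::euclidean_space, 'b::euclidean_space) fpair"
  assumes [measurable]: "fst v \<in> borel_measurable lborel" "snd v \<in> borel_measurable lborel"
  shows "normX_sq v = (\<integral>\<^sup>+ z. ennreal (normX_density v z) \<partial>lborel)"
proof -
  have m1: "(\<lambda>z. ennreal (indicator {z. norm (snd z) < norm (fst z)} z * (omega z)\<^sup>2 * (cmod (fst v z))\<^sup>2))
      \<in> borel_measurable lborel"
    by measurable
  have m2: "(\<lambda>z. ennreal (indicator {z. norm (fst z) \<le> norm (snd z)} z * (lam z)\<^sup>2 * (cmod (fst v z))\<^sup>2))
      \<in> borel_measurable lborel"
    by measurable
  have m3: "(\<lambda>z. ennreal ((cmod (snd v z))\<^sup>2)) \<in> borel_measurable lborel"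
    by measurable
  have "normX_sq v =
      (\<integral>\<^sup>+ z. ennreal (indicator {z. norm (snd z) < norm (fst z)} z * (omega z)\<^sup>2 * (cmod (fst v z))\<^sup>2)
             + ennreal (indicator {z. norm (fst z) \<le> norm (snd z)} z * (lam z)\<^sup>2 * (cmod (fst v z))\<^sup>2)
             + ennreal ((cmod (snd v z))\<^sup>2) \<partial>lborel)"
    unfolding normX_sq_def nn_integral_add[OF borel_measurable_add[OF m1 m2] m3] nn_integral_add[OF m1 m2] ..
  also have "\<dots> = (\<integral>\<^sup>+ z. ennreal (normX_density v z) \<partial>lborel)"
    by (intro nn_integral_cong) (simp add: normX_density_def indicator_def ennreal_plus)
  finally show ?thesis .
qed

lemma normX_sq_mono_AE:
  fixes u v :: "('a::euclidean_space, 'b::euclidean_space) fpair"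
  assumes "fst u \<in> borel_measurable lborel" "snd u \<in> borel_measurable lborel"
    and "fst v \<in> borel_measurable lborel" "snd v \<in> borel_measurable lborel"
    and "AE z in lborel. normX_density u z \<le> normX_density v z"
  shows "normX_sq u \<le> normX_sq v"
  unfolding normX_sq_eq_nn_integral_density[OF assms(1,2)] normX_sq_eq_nn_integral_density[OF assms(3,4)]
  using assms(5) by (intro nn_integral_mono_AE) (auto elim!: eventually_mono intro: ennreal_leI)

lemma normX_sq_cong_AE:
  fixes u v :: "('a::euclidean_space, 'b::euclidean_space) fpair"
  assumes "fst u \<in> borel_measurable lborel" "snd u \<in> borel_measurable lborel"
    and "fst v \<in> borel_measurable lborel" "snd v \<in> borel_measurable lborel"
    and "AE z in lborel. normX_density u z = normX_density v z"
  shows "normX_sq u = normX_sq v"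
  unfolding normX_sq_eq_nn_integral_density[OF assms(1,2)] normX_sq_eq_nn_integral_density[OF assms(3,4)]
  using assms(5) by (intro nn_integral_cong_AE) (auto elim!: eventually_mono)

lemma rotation_norm_eq:
  fixes p q :: complex and c s :: real
  assumes "c\<^sup>2 + s\<^sup>2 = 1"
  shows "(cmod (of_real c * p + of_real s * q))\<^sup>2 + (cmod (of_real (- s) * p + of_real c * q))\<^sup>2
       = (cmod p)\<^sup>2 + (cmod q)\<^sup>2"
proof -
  have "(c * Re p + s * Re q)\<^sup>2 + (c * Im p + s * Im q)\<^sup>2 + (c * Re q - s * Re p)\<^sup>2 + (c * Im q - s * Im p)\<^sup>2
      = (c\<^sup>2 + s\<^sup>2) * ((Re p)\<^sup>2 + (Im p)\<^sup>2 + (Re q)\<^sup>2 + (Im q)\<^sup>2)"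
    by (simp add: power2_eq_square algebra_simps)
  then show ?thesis using assms by (simp add: cmod_power2 algebra_simps)
qed

lemma oscillator_energy_eq:
  fixes p q :: complex and w c s :: real
  assumes "c\<^sup>2 + s\<^sup>2 = 1" "w \<noteq> 0"
  shows "w\<^sup>2 * (cmod (of_real c * p + of_real (s / w) * q))\<^sup>2 + (cmod (of_real (- w * s) * p + of_real c * q))\<^sup>2
       = w\<^sup>2 * (cmod p)\<^sup>2 + (cmod q)\<^sup>2"
proof -
  let ?P = "of_real w * p"
  have "of_real w * (of_real c * p + of_real (s / w) * q) = of_real c * ?P + of_real s * q"
    using assms(2) by (simp add: field_simps)
  then have "w\<^sup>2 * (cmod (of_real c * p + of_real (s / w) * q))\<^sup>2 = (cmod (of_real c * ?P + of_real s * q))\<^sup>2"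
    by (metis norm_mult norm_of_real power2_abs power_mult_distrib)
  moreover have "of_real (- w * s) * p + of_real c * q = of_real (- s) * ?P + of_real c * q"
    by simp
  ultimately have "w\<^sup>2 * (cmod (of_real c * p + of_real (s / w) * q))\<^sup>2
      + (cmod (of_real (- w * s) * p + of_real c * q))\<^sup>2 = (cmod ?P)\<^sup>2 + (cmod q)\<^sup>2"
    using rotation_norm_eq[OF assms(1), of ?P q] by (simp only:)
  also have "\<dots> = w\<^sup>2 * (cmod p)\<^sup>2 + (cmod q)\<^sup>2"
    by (simp add: norm_mult power_mult_distrib)
  finally show ?thesis .
qed

lemma omega_pos: "norm (snd z) < norm (fst z) \<Longrightarrow> 0 < omega z"
  unfolding omega_def by (simp add: power_strict_mono)

lemma lam_pos: "norm (fst z) < norm (snd z) \<Longrightarrow> 0 < lam z"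
  unfolding lam_def by (simp add: power_strict_mono)

lemma normX_density_Phi_centre:
  fixes z :: "'a::euclidean_space \<times> 'b::euclidean_space"
  assumes "norm (snd z) \<le> norm (fst z)"
  shows "normX_density (Phi y w) z = normX_density w z"
proof (cases "norm (snd z) < norm (fst z)")
  case True
  then have "omega z \<noteq> 0"
    using omega_pos by fastforce
  with True show ?thesis
    using oscillator_energy_eq[OF sin_cos_squared_add2 \<open>omega z \<noteq> 0\<close>, of "omega z * y" "fst w z" "snd w z"]
    by (simp add: normX_density_def Phi_def sin_over_def)
next
  case False
  with assms have "norm (snd z) = norm (fst z)"
    by simp
  then show ?thesis
    by (simp add: normX_density_def Phi_def omega_def lam_def)
qed

lemma Phi_hyperbolic_mode:
  fixes z :: "'a::euclidean_space \<times> 'b::euclidean_space"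
  assumes "norm (fst z) < norm (snd z)" "s = 1 \<or> s = -1"
    and "snd w z = of_real (s * lam z) * fst w z"
  shows "fst (Phi y w) z = of_real (exp (s * lam z * y)) * fst w z"
    and "snd (Phi y w) z = of_real (exp (s * lam z * y)) * snd w z"
proof -
  let ?l = "lam z" and ?a = "fst w z"
  have "?l \<noteq> 0"
    using lam_pos[OF assms(1)] by simp
  have exp_eq: "cosh (?l * y) + s * sinh (?l * y) = exp (s * ?l * y)"
    using assms(2) by (elim disjE) (simp_all add: cosh_plus_sinh cosh_minus_sinh)
  have "fst (Phi y w) z = of_real (cosh (?l * y)) * ?a + of_real (sinh (?l * y) / ?l) * (of_real (s * ?l) * ?a)"
    using assms(1,3) \<open>?l \<noteq> 0\<close> by (simp add: Phi_def sinh_over_def)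
  also have "\<dots> = of_real (cosh (?l * y) + s * sinh (?l * y)) * ?a"
    using \<open>?l \<noteq> 0\<close> by (simp add: field_simps)
  finally show "fst (Phi y w) z = of_real (exp (s * ?l * y)) * ?a"
    by (simp only: exp_eq)
  have "snd (Phi y w) z = of_real (?l * sinh (?l * y)) * ?a + of_real (cosh (?l * y)) * (of_real (s * ?l) * ?a)"
    using assms(1,3) by (simp add: Phi_def)
  also have "\<dots> = of_real (cosh (?l * y) + s * sinh (?l * y)) * (of_real (s * ?l) * ?a)"
    using assms(2) by (elim disjE) (simp_all add: algebra_simps)
  finally show "snd (Phi y w) z = of_real (exp (s * ?l * y)) * snd w z"
    by (simp only: exp_eq assms(3))
qed

lemma normX_density_Phi_hyperbolic_mode:
  fixes z :: "'a::euclidean_space \<times> 'b::euclidean_space"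
  assumes "norm (fst z) < norm (snd z)" "s = 1 \<or> s = -1"
    and "snd w z = of_real (s * lam z) * fst w z"
  shows "normX_density (Phi y w) z = (exp (s * lam z * y))\<^sup>2 * normX_density w z"
  using assms(1) Phi_hyperbolic_mode[OF assms, of y]
  by (simp add: normX_density_def norm_mult power_mult_distrib algebra_simps)

lemma normX_density_Phi_decay:
  fixes z :: "'a::euclidean_space \<times> 'b::euclidean_space"
  assumes "norm (fst z) < norm (snd z) \<longrightarrow> snd w z = of_real (s * lam z) * fst w z"
    and "s = 1 \<or> s = -1" "s * y \<le> 0"
  shows "normX_density (Phi y w) z \<le> normX_density w z"
proof (cases "norm (fst z) < norm (snd z)")
  case True
  have "s * lam z * y = lam z * (s * y)"
    by simp
  also have "\<dots> \<le> 0"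
    using lam_pos[OF True] assms(3) by (simp add: mult_nonneg_nonpos)
  finally have "(exp (s * lam z * y))\<^sup>2 \<le> 1"
    by (simp add: power_le_one)
  then have "(exp (s * lam z * y))\<^sup>2 * normX_density w z \<le> normX_density w z"
    by (intro mult_left_le_one_le normX_density_nonneg) simp_all
  with True assms(1,2) show ?thesis
    by (simp add: normX_density_Phi_hyperbolic_mode)
next
  case False
  then show ?thesis
    by (simp add: normX_density_Phi_centre)
qed

lemma normX_sq_Phi_le_stable:
  fixes w :: "('a::euclidean_space, 'b::euclidean_space) fpair"
  assumes "fst w \<in> borel_measurable lborel" "snd w \<in> borel_measurable lborel"
    and "AE z in lborel. norm (fst z) < norm (snd z) \<longrightarrow> fst w z + snd w z / complex_of_real (lam z) = 0"
    and "0 \<le> y"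
  shows "normX_sq (Phi y w) \<le> normX_sq w"
proof (rule normX_sq_mono_AE[OF borel_measurable_Phi[OF assms(1,2)] assms(1,2)])
  show "AE z in lborel. normX_density (Phi y w) z \<le> normX_density w z"
    using assms(3)
  proof eventually_elim
    case (elim z)
    then have "norm (fst z) < norm (snd z) \<longrightarrow> snd w z = of_real (-1 * lam z) * fst w z"
      using lam_pos[of z] by (auto simp: field_simps add_eq_0_iff)
    with \<open>0 \<le> y\<close> show ?case
      by (auto intro!: normX_density_Phi_decay[where s = "-1"])
  qed
qed

lemma normX_sq_Phi_le_unstable:
  fixes w :: "('a::euclidean_space, 'b::euclidean_space) fpair"
  assumes "fst w \<in> borel_measurable lborel" "snd w \<in> borel_measurable lborel"
    and "AE z in lborel. norm (fst z) < norm (snd z) \<longrightarrow> fst w z - snd w z / complex_of_real (lam z) = 0"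
    and "y \<le> 0"
  shows "normX_sq (Phi y w) \<le> normX_sq w"
proof (rule normX_sq_mono_AE[OF borel_measurable_Phi[OF assms(1,2)] assms(1,2)])
  show "AE z in lborel. normX_density (Phi y w) z \<le> normX_density w z"
    using assms(3)
  proof eventually_elim
    case (elim z)
    then have "norm (fst z) < norm (snd z) \<longrightarrow> snd w z = of_real (1 * lam z) * fst w z"
      using lam_pos[of z] by (auto simp: field_simps)
    with \<open>y \<le> 0\<close> show ?case
      by (auto intro!: normX_density_Phi_decay[where s = 1])
  qed
qed

lemma normX_sq_Phi_eq_centre:
  fixes w :: "('a::euclidean_space, 'b::euclidean_space) fpair"
  assumes "fst w \<in> borel_measurable lborel" "snd w \<in> borel_measurable lborel"
    and "AE z in lborel. norm (fst z) < norm (snd z) \<longrightarrow> fst w z = 0 \<and> snd w z = 0"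
  shows "normX_sq (Phi y w) = normX_sq w"
proof (rule normX_sq_cong_AE[OF borel_measurable_Phi[OF assms(1,2)] assms(1,2)])
  show "AE z in lborel. normX_density (Phi y w) z = normX_density w z"
    using assms(3)
  proof eventually_elim
    case (elim z)
    show ?case
    proof (cases "norm (fst z) < norm (snd z)")
      case True
      with elim show ?thesis
        by (simp add: normX_density_def Phi_def)
    next
      case False
      then show ?thesis
        by (simp add: normX_density_Phi_centre)
    qed
  qed
qed

lemma AE_stable_pdiff:
  assumes "u \<in> spaceXS" "v \<in> spaceXS"
  shows "AE z in lborel. norm (fst z) < norm (snd z) \<longrightarrow>
           fst (pdiff u v) z + snd (pdiff u v) z / complex_of_real (lam z) = 0"
proof -
  have "AE z in lborel. norm (fst z) < norm (snd z) \<longrightarrow> fst u z + snd u z / complex_of_real (lam z) = 0"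
    and "AE z in lborel. norm (fst z) < norm (snd z) \<longrightarrow> fst v z + snd v z / complex_of_real (lam z) = 0"
    using assms unfolding spaceXS_def by auto
  then show ?thesis
  proof eventually_elim
    case (elim z)
    have "fst (pdiff u v) z + snd (pdiff u v) z / complex_of_real (lam z)
        = (fst u z + snd u z / complex_of_real (lam z)) - (fst v z + snd v z / complex_of_real (lam z))"
      by (simp add: pdiff_def diff_divide_distrib)
    with elim show ?case
      by simp
  qed
qed

lemma AE_unstable_pdiff:
  assumes "u \<in> spaceXU" "v \<in> spaceXU"
  shows "AE z in lborel. norm (fst z) < norm (snd z) \<longrightarrow>
           fst (pdiff u v) z - snd (pdiff u v) z / complex_of_real (lam z) = 0"
proof -
  have "AE z in lborel. norm (fst z) < norm (snd z) \<longrightarrow> fst u z - snd u z / complex_of_real (lam z) = 0"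
    and "AE z in lborel. norm (fst z) < norm (snd z) \<longrightarrow> fst v z - snd v z / complex_of_real (lam z) = 0"
    using assms unfolding spaceXU_def by auto
  then show ?thesis
  proof eventually_elim
    case (elim z)
    have "fst (pdiff u v) z - snd (pdiff u v) z / complex_of_real (lam z)
        = (fst u z - snd u z / complex_of_real (lam z)) - (fst v z - snd v z / complex_of_real (lam z))"
      by (simp add: pdiff_def diff_divide_distrib)
    with elim show ?case
      by simp
  qed
qed

lemma AE_centre_pdiff:
  assumes "u \<in> spaceXC" "v \<in> spaceXC"
  shows "AE z in lborel. norm (fst z) < norm (snd z) \<longrightarrow> fst (pdiff u v) z = 0 \<and> snd (pdiff u v) z = 0"
proof -
  have "AE z in lborel. norm (fst z) < norm (snd z) \<longrightarrow> fst u z = 0 \<and> snd u z = 0"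
    and "AE z in lborel. norm (fst z) < norm (snd z) \<longrightarrow> fst v z = 0 \<and> snd v z = 0"
    using assms unfolding spaceXC_def by auto
  then show ?thesis
    by eventually_elim (simp add: pdiff_def)
qed

lemma spaceXC_subset_spaceXS: "spaceXC \<subseteq> spaceXS"
  unfolding spaceXC_def spaceXS_def by (auto elim!: eventually_mono)

lemma spaceXC_subset_spaceXU: "spaceXC \<subseteq> spaceXU"
  unfolding spaceXC_def spaceXU_def by (auto elim!: eventually_mono)

theorem theorem3:
  shows "(\<forall>u \<in> (spaceXS :: ('a::euclidean_space, 'b::euclidean_space) fpair set). \<forall>v \<in> spaceXS. \<forall>y1::real. y1 \<ge> 0 \<longrightarrow>
            normX_sq (pdiff (Phi y1 u) (Phi y1 v)) \<le> normX_sq (pdiff u v))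
       \<and> (\<forall>u \<in> (spaceXU :: ('a, 'b) fpair set). \<forall>v \<in> spaceXU. \<forall>y1::real. y1 \<le> 0 \<longrightarrow>
            normX_sq (pdiff (Phi y1 u) (Phi y1 v)) \<le> normX_sq (pdiff u v))
       \<and> (spaceXC :: ('a, 'b) fpair set) \<subseteq> spaceXS
       \<and> (spaceXC :: ('a, 'b) fpair set) \<subseteq> spaceXU
       \<and> (\<forall>u \<in> (spaceXC :: ('a, 'b) fpair set). \<forall>v \<in> spaceXC. \<forall>y1::real.
            normX_sq (pdiff (Phi y1 u) (Phi y1 v)) = normX_sq (pdiff u v))"
proof (intro conjI ballI allI impI spaceXC_subset_spaceXS spaceXC_subset_spaceXU)
  fix u v :: "('a, 'b) fpair" and y1 :: real
  assume "u \<in> spaceXS" "v \<in> spaceXS" "0 \<le> y1"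
  then show "normX_sq (pdiff (Phi y1 u) (Phi y1 v)) \<le> normX_sq (pdiff u v)"
    unfolding Phi_pdiff[symmetric]
    by (intro normX_sq_Phi_le_stable borel_measurable_pdiff AE_stable_pdiff) (auto simp: spaceXS_def)
next
  fix u v :: "('a, 'b) fpair" and y1 :: real
  assume "u \<in> spaceXU" "v \<in> spaceXU" "y1 \<le> 0"
  then show "normX_sq (pdiff (Phi y1 u) (Phi y1 v)) \<le> normX_sq (pdiff u v)"
    unfolding Phi_pdiff[symmetric]
    by (intro normX_sq_Phi_le_unstable borel_measurable_pdiff AE_unstable_pdiff) (auto simp: spaceXU_def)
next
  fix u v :: "('a, 'b) fpair" and y1 :: real
  assume "u \<in> spaceXC" "v \<in> spaceXC"
  then show "normX_sq (pdiff (Phi y1 u) (Phi y1 v)) = normX_sq (pdiff u v)"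
    unfolding Phi_pdiff[symmetric]
    by (intro normX_sq_Phi_eq_centre borel_measurable_pdiff AE_centre_pdiff) (auto simp: spaceXC_def)
qed

end
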